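(* Let $X\in\mathcal{Y}$ be a Banach space with $\dim X>1$ and let $(x_n)_{n\in\mathbb{Z}_+}$ be a sequence in $X$ for which there is a non-zero $u\in X^*$ with $|u(x_n)|=O(n^{-1}\|x_n\|)$ as $n\to\infty$. Then the weak closure of $\Omega=\{zx_n:z\in\mathbb{K},\ n\in\mathbb{Z}_+\}$ is norm nowhere dense in $X$. In particular, $\Omega$ is not weakly dense in $X$.
   Context: $\mathbb{K}\in\{\mathbb{R},\mathbb{C}\}$ is the scalar field. $\mathcal{Y}$ is the class of Banach spaces $X$ such that for every sequence $(x_n)_{n\in\mathbb{Z}_+}$ in $X$ with $n=O(\|x_n\|)$ as $n\to\infty$, the set $\{x_n:n\in\mathbb{Z}_+\}$ is weakly closed. *)

theory Defs
  imports "HOL-Analysis.Analysis" "HOL-Library.Landau_Symbols"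
begin

text \<open>Scalar field: K = C if the flag c is True, K = R (embedded in C) otherwise.\<close>
definition Kscal :: "bool \<Rightarrow> complex set" where
  "Kscal c = (if c then UNIV else \<real>)"

text \<open>A complex structure on a real normed space: multiplication by i,
  compatible with the norm, so that (a + i b) x = a x + b J x makes the space
  a complex normed space.\<close>
definition cstruct :: "('a::real_normed_vector \<Rightarrow> 'a) \<Rightarrow> bool" where
  "cstruct J \<longleftrightarrow> linear J \<and> (\<forall>x. J (J x) = - x)
     \<and> (\<forall>z x. norm (Re z *\<^sub>R x + Im z *\<^sub>R J x) = cmod z * norm x)"

definition smul :: "('a::real_normed_vector \<Rightarrow> 'a) \<Rightarrow> complex \<Rightarrow> 'a \<Rightarrow> 'a" where
  "smul J z x = Re z *\<^sub>R x + Im z *\<^sub>R J x"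

definition Kdual :: "bool \<Rightarrow> ('a::real_normed_vector \<Rightarrow> 'a) \<Rightarrow> ('a \<Rightarrow> complex) set" where
  "Kdual c J = {u. bounded_linear u \<and> (\<forall>x. u x \<in> Kscal c)
      \<and> (\<forall>z\<in>Kscal c. \<forall>x. u (smul J z x) = z * u x)}"

definition weak_top :: "bool \<Rightarrow> ('a::real_normed_vector \<Rightarrow> 'a) \<Rightarrow> 'a topology" where
  "weak_top c J = topology_generated_by {{x. u x \<in> U} | u U. u \<in> Kdual c J \<and> open U}"

definition classY :: "bool \<Rightarrow> ('a::real_normed_vector \<Rightarrow> 'a) \<Rightarrow> bool" where
  "classY c J \<longleftrightarrow> (\<forall>x :: nat \<Rightarrow> 'a.
      (\<lambda>n. real n) \<in> O(\<lambda>n. norm (x n)) \<longrightarrow> closedin (weak_top c J) (range x))"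

definition dim_gt_1 :: "bool \<Rightarrow> ('a::real_normed_vector \<Rightarrow> 'a) \<Rightarrow> bool" where
  "dim_gt_1 c J \<longleftrightarrow> (\<exists>x y. \<forall>a\<in>Kscal c. \<forall>b\<in>Kscal c.
      smul J a x + smul J b y = 0 \<longrightarrow> a = 0 \<and> b = 0)"

end

theory Submission
  imports Defs
begin

(* (1) The weak closure of Omega lies in Omega \<union> ker u.  If p is weakly adherent to Omega
   with u p \<noteq> 0, rescale every x_n with u x_n \<noteq> 0 to the vector w_n with u w_n = u p.  The
   growth hypothesis gives n = O(||w_n||), so range w is weakly closed because X is in Y.
   The normalisation map v \<mapsto> (u p / u v) v is weakly continuous on {u \<noteq> 0} and maps every
   point of Omega off ker u into range w; pulling back the weakly open complement of range w
   gives a weak neighbourhood of p missing Omega, unless p \<in> Omega.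

   (2) No set S \<subseteq> Omega \<union> ker u has norm interior when dim X > 1.  An interior point p with
   u p \<noteq> 0 and a vector v independent of p give uncountably many points p + s v of S off
   ker u, hence in Omega; but an affine line avoiding 0 meets each K-line in at most one
   point, so the countably many lines K x_n cannot cover them.

   Since weakly closed sets are norm closed, the weak closure of Omega equals its norm
   closure and has empty interior, which is the theorem. *)

section \<open>Scalars and the scalar multiplication\<close>

lemma Kscal_real: "complex_of_real r \<in> Kscal c"
  by (simp add: Kscal_def)

lemma Kscal_mult: "a \<in> Kscal c \<Longrightarrow> b \<in> Kscal c \<Longrightarrow> a * b \<in> Kscal c"
  by (auto simp: Kscal_def)

lemma Kscal_diff: "a \<in> Kscal c \<Longrightarrow> b \<in> Kscal c \<Longrightarrow> a - b \<in> Kscal c"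
  by (auto simp: Kscal_def)

lemma Kscal_uminus: "a \<in> Kscal c \<Longrightarrow> - a \<in> Kscal c"
  by (auto simp: Kscal_def)

lemma Kscal_divide: "a \<in> Kscal c \<Longrightarrow> b \<in> Kscal c \<Longrightarrow> a / b \<in> Kscal c"
  by (auto simp: Kscal_def)

lemma Kscal_Im: "\<not> c \<Longrightarrow> z \<in> Kscal c \<Longrightarrow> Im z = 0"
  by (auto simp: Kscal_def complex_is_Real_iff)

lemma smul_diff_scal: "smul J (z - w) x = smul J z x - smul J w x"
  by (simp add: smul_def algebra_simps)

lemma smul_uminus_scal: "smul J (- z) x = - smul J z x"
  by (simp add: smul_def)

lemma smul_zero_scal [simp]: "smul J 0 x = 0"
  by (simp add: smul_def)

lemma smul_one [simp]: "smul J 1 x = x"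
  by (simp add: smul_def)

lemma smul_real [simp]: "smul J (complex_of_real r) x = r *\<^sub>R x"
  by (simp add: smul_def)

lemma smul_add_vec:
  assumes "c \<longrightarrow> cstruct J" "z \<in> Kscal c"
  shows "smul J z (a + b) = smul J z a + smul J z b"
proof (cases c)
  case True
  then have "linear J" using assms cstruct_def by auto
  then show ?thesis by (simp add: smul_def linear_add algebra_simps)
next
  case False
  then show ?thesis using Kscal_Im[OF False assms(2)] by (simp add: smul_def algebra_simps)
qed

lemma smul_zero_vec:
  assumes "c \<longrightarrow> cstruct J" "z \<in> Kscal c"
  shows "smul J z 0 = 0"
  using smul_add_vec[OF assms, of 0 0] by simp

lemma smul_smul:
  assumes "c \<longrightarrow> cstruct J" "z \<in> Kscal c" "w \<in> Kscal c"
  shows "smul J z (smul J w x) = smul J (z * w) x"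
proof (cases c)
  case True
  then have "linear J" "\<And>x. J (J x) = - x" using assms cstruct_def by auto
  then show ?thesis by (simp add: smul_def linear_add linear_scale algebra_simps)
next
  case False
  then show ?thesis
    using Kscal_Im[OF False assms(2)] Kscal_Im[OF False assms(3)] by (simp add: smul_def algebra_simps)
qed

lemma norm_smul:
  assumes "c \<longrightarrow> cstruct J" "z \<in> Kscal c"
  shows "norm (smul J z x) = cmod z * norm x"
proof (cases c)
  case True
  then show ?thesis using assms cstruct_def smul_def by metis
next
  case False
  then show ?thesis using Kscal_Im[OF False assms(2)] by (simp add: smul_def cmod_def)
qed

lemma smul_eq_zero:
  assumes "c \<longrightarrow> cstruct J" "z \<in> Kscal c" "smul J z x = 0" "x \<noteq> 0"
  shows "z = 0"
  using norm_smul[OF assms(1,2), of x] assms(3,4) by simp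

lemma Kdual_smul: "u \<in> Kdual c J \<Longrightarrow> z \<in> Kscal c \<Longrightarrow> u (smul J z x) = z * u x"
  by (simp add: Kdual_def)

lemma Kdual_K: "u \<in> Kdual c J \<Longrightarrow> u x \<in> Kscal c"
  by (simp add: Kdual_def)

lemma Kdual_linear: "u \<in> Kdual c J \<Longrightarrow> linear u"
  by (simp add: Kdual_def bounded_linear.linear)

lemma Kdual_continuous: "u \<in> Kdual c J \<Longrightarrow> continuous_on UNIV u"
  by (simp add: Kdual_def linear_continuous_on)

section \<open>Linear independence over K\<close>

definition Kindep :: "bool \<Rightarrow> ('a::real_normed_vector \<Rightarrow> 'a) \<Rightarrow> 'a \<Rightarrow> 'a \<Rightarrow> bool" where
  "Kindep c J a b \<longleftrightarrow> (\<forall>\<alpha>\<in>Kscal c. \<forall>\<beta>\<in>Kscal c. smul J \<alpha> a + smul J \<beta> b = 0 \<longrightarrow> \<alpha> = 0 \<and> \<beta> = 0)"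

text \<open>If dim X > 1, every nonzero vector p is part of an independent pair: otherwise
  both vectors of a given independent pair would be multiples of p.\<close>
lemma Kindep_extend:
  assumes cJ: "c \<longrightarrow> cstruct J" and D: "dim_gt_1 c J" and p: "p \<noteq> 0"
  shows "\<exists>v. Kindep c J p v"
proof (rule ccontr)
  assume nex: "\<not> ?thesis"
  obtain a b where ab: "Kindep c J a b"
    using D unfolding dim_gt_1_def Kindep_def by blast
  have dep: "\<exists>\<alpha>\<in>Kscal c. \<exists>\<beta>\<in>Kscal c. smul J \<alpha> p + smul J \<beta> v = 0 \<and> \<beta> \<noteq> 0" for v
  proof -
    from nex obtain \<alpha> \<beta> where h: "\<alpha> \<in> Kscal c" "\<beta> \<in> Kscal c"
      "smul J \<alpha> p + smul J \<beta> v = 0" "\<not> (\<alpha> = 0 \<and> \<beta> = 0)"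
      unfolding Kindep_def by blast
    have "\<beta> \<noteq> 0" using h smul_eq_zero[OF cJ h(1) _ p] by auto
    then show ?thesis using h by blast
  qed
  obtain \<alpha>1 \<beta>1 where h1: "\<alpha>1 \<in> Kscal c" "\<beta>1 \<in> Kscal c" "smul J \<alpha>1 p + smul J \<beta>1 a = 0" "\<beta>1 \<noteq> 0"
    using dep[of a] by blast
  obtain \<alpha>2 \<beta>2 where h2: "\<alpha>2 \<in> Kscal c" "\<beta>2 \<in> Kscal c" "smul J \<alpha>2 p + smul J \<beta>2 b = 0" "\<beta>2 \<noteq> 0"
    using dep[of b] by blast
  text \<open>Eliminating p from the two relations yields a relation between a and b.\<close>
  have "0 = smul J \<alpha>2 (smul J \<alpha>1 p + smul J \<beta>1 a) - smul J \<alpha>1 (smul J \<alpha>2 p + smul J \<beta>2 b)"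
    unfolding h1(3) h2(3) using smul_zero_vec[OF cJ h1(1)] smul_zero_vec[OF cJ h2(1)] by simp
  also have "\<dots> = smul J (\<alpha>2 * \<beta>1) a + smul J (- (\<alpha>1 * \<beta>2)) b"
    by (simp add: smul_add_vec[OF cJ h1(1)] smul_add_vec[OF cJ h2(1)] smul_smul[OF cJ h2(1) h1(1)]
        smul_smul[OF cJ h2(1) h1(2)] smul_smul[OF cJ h1(1) h2(1)] smul_smul[OF cJ h1(1) h2(2)]
        smul_uminus_scal mult.commute)
  finally have "\<alpha>2 * \<beta>1 = 0 \<and> - (\<alpha>1 * \<beta>2) = 0"
    using ab Kscal_mult Kscal_uminus h1 h2 unfolding Kindep_def by (metis (no_types))
  then have "\<alpha>2 = 0" using h1(4) by simp
  then have "smul J 0 a + smul J \<beta>2 b = 0" using h2(3) by simp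
  then show False using ab h2(2,4) Kscal_real[of 0] unfolding Kindep_def by fastforce
qed

lemma affine_line_meets_Kline_once:
  assumes cJ: "c \<longrightarrow> cstruct J" and ind: "Kindep c J p v"
    and z: "z \<in> Kscal c" and z': "z' \<in> Kscal c"
    and e: "p + s *\<^sub>R v = smul J z y" and e': "p + s' *\<^sub>R v = smul J z' y"
  shows "s = s'"
proof (rule ccontr)
  assume ss': "s \<noteq> s'"
  have sK: "complex_of_real s \<in> Kscal c" "complex_of_real s' \<in> Kscal c" by (rule Kscal_real)+
  have "smul J z' (p + s *\<^sub>R v) = smul J z (p + s' *\<^sub>R v)"
    unfolding e e' by (simp add: smul_smul[OF cJ] z z' mult.commute)
  moreover have "smul J w (r *\<^sub>R v) = smul J (w * of_real r) v" if "w \<in> Kscal c" for w r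
    using smul_smul[OF cJ that Kscal_real, of r v] by simp
  ultimately have "smul J z' p + smul J (z' * of_real s) v = smul J z p + smul J (z * of_real s') v"
    by (simp add: smul_add_vec[OF cJ] z z')
  then have "smul J (z' - z) p + smul J (z' * of_real s - z * of_real s') v = 0"
    by (simp add: smul_diff_scal algebra_simps)
  then have "z' - z = 0 \<and> z' * of_real s - z * of_real s' = 0"
    using ind Kscal_diff Kscal_mult z z' sK unfolding Kindep_def by blast
  then have "z = 0" using ss' by auto
  then have "smul J 1 p + smul J (of_real s) v = 0" using e by (simp add: smul_def)
  then show False using ind sK(1) Kscal_real[of 1] unfolding Kindep_def by fastforce
qed

section \<open>The weak topology\<close>

lemma weak_topspace [simp]: "topspace (weak_top c J) = UNIV"
proof -
  have "UNIV \<in> {{x. u x \<in> U} | u U. u \<in> Kdual c J \<and> open U}"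
    by (rule CollectI, rule exI[of _ "\<lambda>_. 0"], rule exI[of _ UNIV])
       (auto simp: Kdual_def Kscal_def smul_def)
  then show ?thesis unfolding weak_top_def topology_generated_by_topspace by auto
qed

lemma weak_basic: "f \<in> Kdual c J \<Longrightarrow> open U \<Longrightarrow> openin (weak_top c J) {x. f x \<in> U}"
  unfolding weak_top_def
  by (rule topology_generated_by_Basis) (rule CollectI, intro exI conjI, rule refl, assumption+)

lemma weak_pair:
  assumes f: "f \<in> Kdual c J" and g: "g \<in> Kdual c J" and G: "open G"
  shows "openin (weak_top c J) {v. (f v, g v) \<in> G}"
proof (subst openin_subopen, intro ballI)
  fix v assume "v \<in> {v. (f v, g v) \<in> G}"
  then obtain A B where AB: "open A" "open B" "(f v, g v) \<in> A \<times> B" "A \<times> B \<subseteq> G"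
    using open_prod_elim[OF G] by blast
  have "openin (weak_top c J) ({x. f x \<in> A} \<inter> {x. g x \<in> B})"
    using weak_basic[OF f AB(1)] weak_basic[OF g AB(2)] by (rule openin_Int)
  moreover have "{x. f x \<in> A} \<inter> {x. g x \<in> B} \<subseteq> {v. (f v, g v) \<in> G}" using AB(4) by blast
  ultimately show "\<exists>T. openin (weak_top c J) T \<and> v \<in> T \<and> T \<subseteq> {v. (f v, g v) \<in> G}"
    using AB(3) by blast
qed

lemma weak_open_imp_open:
  assumes "openin (weak_top c J) S" shows "open S"
proof -
  have "generate_topology_on {{x. u x \<in> U} | u U. u \<in> Kdual c J \<and> open U} S"
    using assms unfolding weak_top_def by (rule openin_topology_generated_by)
  then show ?thesis
  proof induction
    case (Basis s)
    then obtain f U where "s = f -` U" "f \<in> Kdual c J" "open U" by (auto simp: vimage_def)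
    then show ?case using Kdual_continuous open_vimage by blast
  qed auto
qed

lemma weak_closed_imp_closed:
  assumes "closedin (weak_top c J) S" shows "closed S"
  using assms weak_open_imp_open[of c J "- S"] by (simp add: closedin_def Compl_eq_Diff_UNIV closed_def)

text \<open>The normalisation v \<mapsto> (t / u v) v, defined where u v \<noteq> 0, is weakly continuous:
  its composition with any functional f is (t / u v) f v, a continuous function of the
  pair (u v, f v).\<close>
lemma weak_normalisation_preimage_open:
  assumes u: "u \<in> Kdual c J" and t: "t \<in> Kscal c" and V: "openin (weak_top c J) V"
  shows "openin (weak_top c J) {v. u v \<noteq> 0 \<and> smul J (t / u v) v \<in> V}"
proof -
  have "generate_topology_on {{x. u x \<in> U} | u U. u \<in> Kdual c J \<and> open U} V"
    using V unfolding weak_top_def by (rule openin_topology_generated_by)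
  then show ?thesis
  proof induction
    case Empty then show ?case by simp
  next
    case (Int a b)
    have "{v. u v \<noteq> 0 \<and> smul J (t / u v) v \<in> a \<inter> b} =
       {v. u v \<noteq> 0 \<and> smul J (t / u v) v \<in> a} \<inter> {v. u v \<noteq> 0 \<and> smul J (t / u v) v \<in> b}" by auto
    then show ?case using Int by (simp add: openin_Int)
  next
    case (UN K)
    have "{v. u v \<noteq> 0 \<and> smul J (t / u v) v \<in> \<Union>K} =
       \<Union>((\<lambda>k. {v. u v \<noteq> 0 \<and> smul J (t / u v) v \<in> k}) ` K)" by auto
    then show ?case using UN by (auto intro!: openin_Union)
  next
    case (Basis s)
    then obtain f U where fU: "s = {x. f x \<in> U}" "f \<in> Kdual c J" "open U" by blast
    let ?G = "{q :: complex \<times> complex. fst q \<noteq> 0 \<and> t / fst q * snd q \<in> U}"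
    have "open ?G"
    proof -
      have "open {q :: complex \<times> complex. fst q \<noteq> 0}"
        by (intro open_Collect_neq continuous_on_fst continuous_on_id continuous_on_const)
      moreover have "continuous_on {q :: complex \<times> complex. fst q \<noteq> 0} (\<lambda>q. t / fst q * snd q)"
        by (auto intro!: continuous_intros)
      ultimately have "open ({q. fst q \<noteq> 0} \<inter> (\<lambda>q. t / fst q * snd q) -` U)"
        using continuous_open_preimage fU(3) by blast
      then show ?thesis by (simp add: vimage_def Int_def conj_commute)
    qed
    moreover have "{v. u v \<noteq> 0 \<and> smul J (t / u v) v \<in> s} = {v. (u v, f v) \<in> ?G}"
      using fU Kdual_smul[OF fU(2) Kscal_divide[OF t Kdual_K[OF u]]] by auto
    ultimately show ?case using weak_pair[OF u fU(2)] by (simp only:)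
  qed
qed

section \<open>The weak closure of the cone of lines\<close>

definition Kcone :: "bool \<Rightarrow> ('a::real_normed_vector \<Rightarrow> 'a) \<Rightarrow> (nat \<Rightarrow> 'a) \<Rightarrow> 'a set" where
  "Kcone c J x = {smul J z (x n) | z n. z \<in> Kscal c}"

text \<open>The vector x n rescaled so that u takes the value u p on it; the terms with u (x n) = 0
  are replaced by 2 n p, which also grows linearly and never equals p.\<close>
definition rescaled :: "('a::real_normed_vector \<Rightarrow> 'a) \<Rightarrow> ('a \<Rightarrow> complex) \<Rightarrow> 'a \<Rightarrow> (nat \<Rightarrow> 'a) \<Rightarrow> nat \<Rightarrow> 'a"
  where "rescaled J u p x n =
    (if u (x n) \<noteq> 0 then smul J (u p / u (x n)) (x n) else (2 * real n) *\<^sub>R p)"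

lemma rescaled_growth:
  assumes cJ: "c \<longrightarrow> cstruct J" and u: "u \<in> Kdual c J" and up: "u p \<noteq> 0"
    and O: "(\<lambda>n. cmod (u (x n))) \<in> O(\<lambda>n. norm (x n) / real n)"
  shows "(\<lambda>n. real n) \<in> O(\<lambda>n. norm (rescaled J u p x n))"
proof -
  have p0: "p \<noteq> 0" using up linear_0[OF Kdual_linear[OF u]] by auto
  obtain C where C: "C > 0" "eventually (\<lambda>n. norm (cmod (u (x n))) \<le> C * norm (norm (x n) / real n)) at_top"
    using O by (elim landau_o.bigE)
  define K where "K = max (C / cmod (u p)) (1 / (2 * norm p))"
  have "eventually (\<lambda>n. real n \<le> K * norm (rescaled J u p x n)) at_top"
    using C(2) eventually_ge_at_top[of "1::nat"]
  proof eventually_elim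
    case (elim n)
    show ?case
    proof (cases "u (x n) \<noteq> 0")
      case True
      have w: "norm (rescaled J u p x n) = cmod (u p) * norm (x n) / cmod (u (x n))"
        using True norm_smul[OF cJ Kscal_divide[OF Kdual_K[OF u] Kdual_K[OF u]]]
        by (simp add: rescaled_def norm_divide)
      have "real n * cmod (u (x n)) \<le> C * norm (x n)"
        using elim by (simp add: field_simps)
      then have "real n * cmod (u (x n)) * cmod (u p) \<le> C * norm (x n) * cmod (u p)"
        by (rule mult_right_mono) simp
      then have "cmod (u (x n)) * (real n * cmod (u p)) \<le> C * norm (x n) * cmod (u p)"
        by (simp add: ac_simps)
      also have "\<dots> = cmod (u (x n)) * (C * norm (rescaled J u p x n))"
        unfolding w using True by simp
      finally have "real n * cmod (u p) \<le> C * norm (rescaled J u p x n)"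
        using True by simp
      then have "real n \<le> (C / cmod (u p)) * norm (rescaled J u p x n)"
        using up by (simp add: field_simps)
      also have "\<dots> \<le> K * norm (rescaled J u p x n)"
        unfolding K_def by (rule mult_right_mono) auto
      finally show ?thesis .
    next
      case False
      then have "real n = (1 / (2 * norm p)) * norm (rescaled J u p x n)"
        using p0 by (simp add: rescaled_def)
      also have "\<dots> \<le> K * norm (rescaled J u p x n)"
        unfolding K_def by (rule mult_right_mono) auto
      finally show ?thesis .
    qed
  qed
  then show ?thesis by (intro bigoI) simp
qed

lemma rescaled_avoids:
  assumes u: "u \<in> Kdual c J" and up: "u p \<noteq> 0" and pO: "p \<notin> Kcone c J x"
  shows "p \<notin> range (rescaled J u p x)"
proof
  assume "p \<in> range (rescaled J u p x)"
  then obtain n where n: "rescaled J u p x n = p" by (metis rangeE)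
  show False
  proof (cases "u (x n) \<noteq> 0")
    case True
    then have "p = smul J (u p / u (x n)) (x n)" using n by (simp add: rescaled_def)
    moreover have "u p / u (x n) \<in> Kscal c" by (rule Kscal_divide[OF Kdual_K[OF u] Kdual_K[OF u]])
    ultimately have "p \<in> Kcone c J x" unfolding Kcone_def by blast
    then show False using pO by blast
  next
    case False
    have p0: "p \<noteq> 0" using up linear_0[OF Kdual_linear[OF u]] by auto
    have "(2 * real n) *\<^sub>R p = p" using n False by (simp add: rescaled_def)
    then have "(2 * real n - 1) *\<^sub>R p = 0" by (simp add: scaleR_diff_left)
    moreover have "2 * real n - 1 \<noteq> 0"
    proof
      assume "2 * real n - 1 = 0"
      then have "2 * n = (1::nat)" by linarith
      then show False by presburger
    qed
    ultimately show False using p0 by simp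
  qed
qed

lemma normalisation_of_cone_point:
  assumes cJ: "c \<longrightarrow> cstruct J" and u: "u \<in> Kdual c J" and z: "z \<in> Kscal c"
    and uy: "u (smul J z (x n)) \<noteq> 0"
  shows "smul J (u p / u (smul J z (x n))) (smul J z (x n)) = rescaled J u p x n"
proof -
  have eq: "u (smul J z (x n)) = z * u (x n)" using Kdual_smul[OF u z] .
  then have "z \<noteq> 0" "u (x n) \<noteq> 0" using uy by auto
  moreover have "smul J (u p / u (smul J z (x n))) (smul J z (x n))
      = smul J (u p / u (smul J z (x n)) * z) (x n)"
    using smul_smul[OF cJ Kscal_divide[OF Kdual_K[OF u] Kdual_K[OF u]] z] .
  ultimately show ?thesis unfolding eq by (simp add: rescaled_def)
qed

lemma weak_closure_Kcone_subset:
  assumes cJ: "c \<longrightarrow> cstruct J" and Y: "classY c J" and u: "u \<in> Kdual c J"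
    and O: "(\<lambda>n. cmod (u (x n))) \<in> O(\<lambda>n. norm (x n) / real n)"
  shows "weak_top c J closure_of Kcone c J x \<subseteq> Kcone c J x \<union> {v. u v = 0}"
proof
  fix p assume p: "p \<in> weak_top c J closure_of Kcone c J x"
  show "p \<in> Kcone c J x \<union> {v. u v = 0}"
  proof (rule ccontr)
    assume "p \<notin> Kcone c J x \<union> {v. u v = 0}"
    then have pO: "p \<notin> Kcone c J x" and up: "u p \<noteq> 0" by auto
    let ?w = "rescaled J u p x"
    define W where "W = {v. u v \<noteq> 0 \<and> smul J (u p / u v) v \<in> - range ?w}"
    have "closedin (weak_top c J) (range ?w)"
      using Y rescaled_growth[OF cJ u up O] unfolding classY_def by blast
    then have "openin (weak_top c J) (- range ?w)" by (simp add: closedin_def Compl_eq_Diff_UNIV)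
    then have "openin (weak_top c J) W"
      unfolding W_def by (rule weak_normalisation_preimage_open[OF u Kdual_K[OF u]])
    moreover have "p \<in> W"
      using up rescaled_avoids[OF u up pO] unfolding W_def by simp
    ultimately obtain y where y: "y \<in> Kcone c J x" "y \<in> W"
      using p unfolding in_closure_of by blast
    then obtain z n where zn: "y = smul J z (x n)" "z \<in> Kscal c" unfolding Kcone_def by blast
    have "u y \<noteq> 0" "smul J (u p / u y) y \<notin> range ?w" using y(2) unfolding W_def by auto
    then show False using normalisation_of_cone_point[OF cJ u zn(2)] unfolding zn(1) by auto
  qed
qed

section \<open>Sets contained in Omega \<union> ker u have empty interior\<close>

lemma open_meets_outside_kernel:
  fixes u :: "'a::real_normed_vector \<Rightarrow> complex"
  assumes lu: "linear u" and un: "u \<noteq> (\<lambda>_. 0)" and S: "open S" "q \<in> S"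
  shows "\<exists>p\<in>S. u p \<noteq> 0"
proof (cases "u q = 0")
  case False then show ?thesis using S by blast
next
  case True
  obtain e where e: "u e \<noteq> 0" using un by blast
  then have e0: "e \<noteq> 0" using linear_0[OF lu] by auto
  obtain r where r: "r > 0" "ball q r \<subseteq> S" using S open_contains_ball by blast
  define p where "p = q + (r / (2 * norm e)) *\<^sub>R e"
  have "u p = of_real (r / (2 * norm e)) * u e"
    unfolding p_def using True linear_add[OF lu] linear_scale[OF lu] by (simp add: scaleR_conv_of_real)
  then have "u p \<noteq> 0" using e e0 r(1) by simp
  moreover have "p \<in> ball q r" unfolding p_def using e0 r(1) by (simp add: dist_norm)
  ultimately show ?thesis using r(2) by blast
qed

text \<open>Along the affine line through an interior point p with u p \<noteq> 0 in an independent
  direction v, an open, hence uncountable, set of parameters s gives points of Omega; each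
  lies on some line K x n, and distinct parameters need distinct lines.\<close>
lemma interior_subset_Kcone_kernel_empty:
  fixes x :: "nat \<Rightarrow> 'a::real_normed_vector"
  assumes cJ: "c \<longrightarrow> cstruct J" and D: "dim_gt_1 c J"
    and u: "u \<in> Kdual c J" and un: "u \<noteq> (\<lambda>_. 0)"
    and S: "S \<subseteq> Kcone c J x \<union> {v. u v = 0}"
  shows "interior S = {}"
proof (rule ccontr)
  assume "interior S \<noteq> {}"
  then obtain p where p: "p \<in> interior S" "u p \<noteq> 0"
    using open_meets_outside_kernel[OF Kdual_linear[OF u] un open_interior] by blast
  then have "p \<noteq> 0" using linear_0[OF Kdual_linear[OF u]] by auto
  then obtain v where ind: "Kindep c J p v" using Kindep_extend[OF cJ D] by blast
  define T where "T = (\<lambda>s::real. p + s *\<^sub>R v) -` (interior S \<inter> {v. u v \<noteq> 0})"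
  have "open {v. u v \<noteq> 0}"
    by (rule open_Collect_neq[OF Kdual_continuous[OF u] continuous_on_const])
  then have "open T"
    unfolding T_def by (intro continuous_open_vimage open_Int open_interior) (auto intro!: continuous_intros)
  moreover have "0 \<in> T" using p by (simp add: T_def)
  ultimately obtain \<delta> where "\<delta> > 0" "ball 0 \<delta> \<subseteq> T" using open_contains_ball by blast
  then have "uncountable T" using uncountable_ball[of \<delta> 0] countable_subset by blast
  have "\<exists>n z. z \<in> Kscal c \<and> p + s *\<^sub>R v = smul J z (x n)" if "s \<in> T" for s
    using that S interior_subset unfolding T_def Kcone_def by blast
  then obtain N Z where NZ: "\<And>s. s \<in> T \<Longrightarrow> Z s \<in> Kscal c \<and> p + s *\<^sub>R v = smul J (Z s) (x (N s))"
    by metis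
  have "inj_on N T"
  proof (rule inj_onI)
    fix s s' assume s: "s \<in> T" and s': "s' \<in> T" and N: "N s = N s'"
    have "Z s \<in> Kscal c" "Z s' \<in> Kscal c" "p + s *\<^sub>R v = smul J (Z s) (x (N s))"
      "p + s' *\<^sub>R v = smul J (Z s') (x (N s))" using NZ[OF s] NZ[OF s'] N by auto
    then show "s = s'" by (rule affine_line_meets_Kline_once[OF cJ ind])
  qed
  moreover have "countable (N ` T)" by (rule countableI_type)
  ultimately have "countable T" using countable_image_inj_on by blast
  with \<open>uncountable T\<close> show False by blast
qed

theorem lemma2p3:
  fixes c :: bool and J :: "'a::banach \<Rightarrow> 'a" and x :: "nat \<Rightarrow> 'a" and u :: "'a \<Rightarrow> complex"
  assumes "c \<longrightarrow> cstruct J"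
    and "classY c J"
    and "dim_gt_1 c J"
    and "u \<in> Kdual c J" and "u \<noteq> (\<lambda>_. 0)"
    and "(\<lambda>n. cmod (u (x n))) \<in> O(\<lambda>n. norm (x n) / real n)"
  shows "interior (closure (weak_top c J closure_of {smul J z (x n) | z n. z \<in> Kscal c})) = {}
     \<and> weak_top c J closure_of {smul J z (x n) | z n. z \<in> Kscal c} \<noteq> UNIV"
proof -
  define A where "A = weak_top c J closure_of Kcone c J x"
  have "closed A" unfolding A_def by (rule weak_closed_imp_closed[OF closedin_closure_of])
  then have "closure A = A" by (rule closure_closed)
  moreover have "interior A = {}"
    using interior_subset_Kcone_kernel_empty[OF assms(1,3-5)]
      weak_closure_Kcone_subset[OF assms(1,2,4,6)] unfolding A_def by blast
  moreover have "A \<noteq> UNIV" using \<open>interior A = {}\<close> by auto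
  ultimately show ?thesis unfolding A_def Kcone_def by simp
qed

end
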